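(* Let $1\le k<n$, $m=\binom{n}{k}$, and let $\mathbf{A}=(A_1,\ldots,A_n)$ be an $n$-outcome POVM on $\mathbb{C}^d$. Then $\mathbf{A}$ is $k$-outcome-simulable if and only if there exist a probability vector $\vec p=(p_1,\ldots,p_m)$ and positive semidefinite operators $M_{ij}$ ($1\le i\le n$, $1\le j\le m$) such that $\sum_{j}M_{ij}=A_i$ for all $i$, $\sum_i M_{ij}=p_j\mathbb{I}$ for all $j$ (i.e. $\mathbf{M}$ is a joint measurement for the pair $\{\mathbf{A},(p_1\mathbb{I},\ldots,p_m\mathbb{I})\}$), and for every $j$ at least $n-k$ of the operators $M_{1j},\ldots,M_{nj}$ are zero.
   Context: A POVM on $\mathbb{C}^d$ with $n$ outcomes is a tuple $\mathbf{A}=(A_1,\ldots,A_n)$ of positive semidefinite operators with $\sum_a A_a=\mathbb{I}$ (some effects may be zero). Given a set $\mathcal{B}=\{\mathbf{B}^{(j)}\}_j$ of POVMs, a POVM $\mathbf{A}$ with $n$ outcomes is $\mathcal{B}$-simulable if there are a probability distribution $p(j)$ over (finitely many) elements of $\mathcal{B}$ and conditional probability distributions $q(i|j,i')$ (over $i\in\{1,\ldots,n\}$, for each $j$ and each outcome $i'$ of $\mathbf{B}^{(j)}$) such that $A_i=\sum_j p(j)\sum_{i'}q(i|j,i')B^{(j)}_{i'}$ for all $i$. $\mathbf{A}$ is $k$-outcome-simulable if it is $\mathcal{B}$-simulable where $\mathcal{B}$ is the set of all $k$-outcome POVMs on $\mathbb{C}^d$. *)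

theory Defs
  imports "HOL-Analysis.Analysis"
begin

text \<open>Operators on C^d are d x d complex matrices, with d = CARD('d) for a finite type 'd.
  Outcomes of an n-outcome POVM are indexed by 0..<n.\<close>

definition quad_form :: "complex^'d^'d \<Rightarrow> complex^'d \<Rightarrow> complex" where
  "quad_form A v = (\<Sum>i\<in>UNIV. cnj (v $ i) * ((A *v v) $ i))"

definition psd :: "complex^'d^'d \<Rightarrow> bool" where
  "psd A \<longleftrightarrow> (\<forall>v. Im (quad_form A v) = 0 \<and> Re (quad_form A v) \<ge> 0)"

definition povm :: "nat \<Rightarrow> (nat \<Rightarrow> complex^'d^'d) \<Rightarrow> bool" where
  "povm n A \<longleftrightarrow> (\<forall>a<n. psd (A a)) \<and> (\<Sum>a<n. A a) = mat 1"

text \<open>A is k-outcome-simulable: there are finitely many k-outcome POVMs B 0, ..., B (N-1),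
  a probability distribution p over them and classical post-processings q i r i'
  (probability of outcome i given POVM r and its outcome i').\<close>
definition k_outcome_simulable :: "nat \<Rightarrow> nat \<Rightarrow> (nat \<Rightarrow> complex^'d^'d) \<Rightarrow> bool" where
  "k_outcome_simulable k n A \<longleftrightarrow>
     (\<exists>(N::nat) (p::nat \<Rightarrow> real) (B::nat \<Rightarrow> nat \<Rightarrow> complex^'d^'d) (q::nat \<Rightarrow> nat \<Rightarrow> nat \<Rightarrow> real).
        (\<forall>r<N. povm k (B r)) \<and>
        (\<forall>r<N. p r \<ge> 0) \<and> (\<Sum>r<N. p r) = 1 \<and>
        (\<forall>r<N. \<forall>i'<k. (\<forall>i<n. q i r i' \<ge> 0) \<and> (\<Sum>i<n. q i r i') = 1) \<and>
        (\<forall>i<n. A i = (\<Sum>r<N. p r *\<^sub>R (\<Sum>i'<k. q i r i' *\<^sub>R B r i'))))"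

end

theory Submission
  imports Defs
begin

text \<open>A stochastic relabelling q is the mixture of the deterministic relabellings f with weights
  \<Prod>x. q (f x) x, so A is a convex combination of n-outcome POVMs each having at most k nonzero
  effects; conversely such a POVM is a deterministic relabelling of a k-outcome POVM.
  Grouping the members of such a mixture according to a k-element set of outcomes containing
  their nonzero effects (there are n choose k such sets) yields the joint measurement M, and
  normalising its columns gives back a mixture.\<close>

lemma quad_form_add: "quad_form (A + B) v = quad_form A v + quad_form B v"
  unfolding quad_form_def by (simp add: matrix_vector_mult_add_rdistrib distrib_left sum.distrib)

lemma quad_form_scaleR: "quad_form (c *\<^sub>R A) v = of_real c * quad_form A v"
  unfolding quad_form_def
  by (simp add: matrix_vector_mult_def sum_distrib_left sum_distrib_right)
    (simp add: scaleR_conv_of_real mult_ac)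

lemma quad_form_0 [simp]: "quad_form 0 v = 0"
  unfolding quad_form_def by simp

lemma quad_form_sum: "quad_form (sum f S) v = (\<Sum>x\<in>S. quad_form (f x) v)"
  by (induction S rule: infinite_finite_induct) (auto simp: quad_form_add)

lemma quad_form_axis_add_axis:
  fixes A :: "complex^'d^'d"
  assumes "a \<noteq> b"
  shows "quad_form A (axis a x + axis b y)
     = cnj x * (A $ a $ a * x + A $ a $ b * y) + cnj y * (A $ b $ a * x + A $ b $ b * y)"
  using assms
  by (simp add: quad_form_def matrix_vector_mult_def axis_def if_distrib[of cnj]
      if_distrib[of "\<lambda>z. z * _"] if_distrib[of "\<lambda>z. _ * z"] sum.distrib distrib_left distrib_right
      cong: if_cong)

lemma quad_form_axis:
  fixes A :: "complex^'d^'d"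
  shows "quad_form A (axis a 1) = A $ a $ a"
  by (simp add: quad_form_def matrix_vector_mult_def axis_def if_distrib[of cnj]
      if_distrib[of "\<lambda>z. z * _"] if_distrib[of "\<lambda>z. _ * z"] cong: if_cong)

lemma matrix_eq_0_if_quad_form_eq_0:
  fixes A :: "complex^'d^'d"
  assumes "\<And>v. quad_form A v = 0"
  shows "A = 0"
proof -
  have diag: "A $ a $ a = 0" for a
    using assms[of "axis a 1"] by (simp add: quad_form_axis)
  have "A $ a $ b = 0" if "a \<noteq> b" for a b
  proof -
    have "A $ a $ b + A $ b $ a = 0"
      using assms[of "axis a 1 + axis b 1"] quad_form_axis_add_axis[OF that, of A 1 1] diag by simp
    moreover have "\<i> * (A $ a $ b - A $ b $ a) = 0"
      using assms[of "axis a 1 + axis b \<i>"] quad_form_axis_add_axis[OF that, of A 1 \<i>] diag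
      by (simp add: algebra_simps)
    ultimately show ?thesis by simp
  qed
  with diag show ?thesis by (metis vec_eq_iff zero_index)
qed

lemma psd_0 [simp]: "psd 0"
  unfolding psd_def by simp

lemma psd_add: "psd A \<Longrightarrow> psd B \<Longrightarrow> psd (A + B)"
  unfolding psd_def by (simp add: quad_form_add)

lemma psd_scaleR: "psd A \<Longrightarrow> 0 \<le> c \<Longrightarrow> psd (c *\<^sub>R A)"
  unfolding psd_def by (simp add: quad_form_scaleR)

lemma psd_sum: "(\<And>x. x \<in> S \<Longrightarrow> psd (f x)) \<Longrightarrow> psd (sum f S)"
  by (induction S rule: infinite_finite_induct) (auto simp: psd_add)

lemma mat_1_neq_0: "mat 1 \<noteq> (0 :: 'a::zero_neq_one^'n^'n)"
proof
  assume "mat 1 = (0 :: 'a^'n^'n)"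
  then have "(mat 1 :: 'a^'n^'n) $ i $ i = 0" for i
    by simp
  then show False
    by (simp add: mat_def)
qed

lemma povm_imp_pos: "povm n E \<Longrightarrow> 0 < n"
  using mat_1_neq_0 unfolding povm_def by (metis gr0I lessThan_0 sum.empty)

lemma psd_sum_eq_0_imp_eq_0:
  fixes f :: "'a \<Rightarrow> complex^'d^'d"
  assumes "finite S" and "\<And>x. x \<in> S \<Longrightarrow> psd (f x)" and "sum f S = 0" and "x \<in> S"
  shows "f x = 0"
proof (rule matrix_eq_0_if_quad_form_eq_0)
  fix v
  have psd_v: "Im (quad_form (f y) v) = 0 \<and> 0 \<le> Re (quad_form (f y) v)" if "y \<in> S" for y
    using assms(2)[OF that] unfolding psd_def by blast
  have "(\<Sum>y\<in>S. Re (quad_form (f y) v)) = Re (quad_form (sum f S) v)"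
    by (simp only: quad_form_sum Re_sum)
  also have "\<dots> = 0"
    using assms(3) by simp
  finally have "(\<Sum>y\<in>S. Re (quad_form (f y) v)) = 0" .
  moreover have "\<forall>y\<in>S. 0 \<le> Re (quad_form (f y) v)"
    using psd_v by blast
  ultimately have "Re (quad_form (f x) v) = 0"
    using sum_nonneg_eq_0_iff[OF assms(1), of "\<lambda>y. Re (quad_form (f y) v)"] assms(4) by simp
  moreover have "Im (quad_form (f x) v) = 0"
    using psd_v assms(4) by blast
  ultimately show "quad_form (f x) v = 0"
    by (simp add: complex_eq_iff)
qed

lemma sum_PiE_prod_eq_1:
  fixes Q :: "'b \<Rightarrow> 'a \<Rightarrow> 'c::comm_semiring_1"
  assumes "finite I" and "finite J" and "\<And>x. x \<in> I \<Longrightarrow> (\<Sum>y\<in>J. Q y x) = 1"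
  shows "(\<Sum>f\<in>PiE I (\<lambda>_. J). \<Prod>x\<in>I. Q (f x) x) = 1"
  using prod_sum_PiE[of I "\<lambda>_. J" "\<lambda>x y. Q y x"] assms by simp

lemma sum_PiE_prod_marginal:
  fixes Q :: "'b \<Rightarrow> 'a \<Rightarrow> 'c::comm_semiring_1"
  assumes "finite I" and "finite J" and "\<And>x. x \<in> I \<Longrightarrow> (\<Sum>y\<in>J. Q y x) = 1"
    and "x\<^sub>0 \<in> I" and "y\<^sub>0 \<in> J"
  shows "(\<Sum>f\<in>PiE I (\<lambda>_. J). if f x\<^sub>0 = y\<^sub>0 then \<Prod>x\<in>I. Q (f x) x else 0) = Q y\<^sub>0 x\<^sub>0"
proof -
  define R where "R x y = (if x = x\<^sub>0 then (if y = y\<^sub>0 then Q y x else 0) else Q y x)" for x y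
  have "(if f x\<^sub>0 = y\<^sub>0 then \<Prod>x\<in>I. Q (f x) x else 0) = (\<Prod>x\<in>I. R x (f x))" for f
    using assms(1,4) by (cases "f x\<^sub>0 = y\<^sub>0") (auto simp: R_def intro!: prod.cong prod_zero)
  then have "(\<Sum>f\<in>PiE I (\<lambda>_. J). if f x\<^sub>0 = y\<^sub>0 then \<Prod>x\<in>I. Q (f x) x else 0)
      = (\<Prod>x\<in>I. \<Sum>y\<in>J. R x y)"
    using prod_sum_PiE[of I "\<lambda>_. J" R] assms(1,2) by simp
  also have "\<dots> = (\<Prod>x\<in>I. if x = x\<^sub>0 then Q y\<^sub>0 x\<^sub>0 else 1)"
    using assms(2,3,5) by (intro prod.cong) (auto simp: R_def sum.delta')
  also have "\<dots> = Q y\<^sub>0 x\<^sub>0"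
    using assms(1,4) by simp
  finally show ?thesis .
qed

definition coarse_grain :: "nat \<Rightarrow> (nat \<Rightarrow> nat) \<Rightarrow> (nat \<Rightarrow> 'a::comm_monoid_add) \<Rightarrow> nat \<Rightarrow> 'a" where
  "coarse_grain k f B i = (\<Sum>i'<k. if f i' = i then B i' else 0)"

definition nonzero_outcomes :: "nat \<Rightarrow> (nat \<Rightarrow> 'a::zero) \<Rightarrow> nat set" where
  "nonzero_outcomes n E = {i. i < n \<and> E i \<noteq> 0}"

lemma finite_nonzero_outcomes [simp]: "finite (nonzero_outcomes n E)"
  by (simp add: nonzero_outcomes_def)

lemma card_zero_outcomes_ge_iff:
  "n - k \<le> card {i. i < n \<and> E i = 0} \<longleftrightarrow> card (nonzero_outcomes n E) \<le> k"
proof -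
  have "{..<n} = nonzero_outcomes n E \<union> {i. i < n \<and> E i = 0}"
    and "nonzero_outcomes n E \<inter> {i. i < n \<and> E i = 0} = {}"
    by (auto simp: nonzero_outcomes_def)
  then have "card (nonzero_outcomes n E) + card {i. i < n \<and> E i = 0} = n"
    by (metis card_Un_disjoint card_lessThan finite_Un finite_lessThan)
  then show ?thesis
    by linarith
qed

lemma sum_coarse_grain:
  assumes "f \<in> {..<k} \<rightarrow> {..<n}"
  shows "(\<Sum>i<n. coarse_grain k f B i) = (\<Sum>i'<k. B i')"
  unfolding coarse_grain_def using assms
  by (subst sum.swap) (auto intro!: sum.cong simp: sum.delta)

lemma coarse_grain_eq_0: "i \<notin> f ` {..<k} \<Longrightarrow> coarse_grain k f B i = 0"
  unfolding coarse_grain_def by (auto intro!: sum.neutral)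

lemma card_nonzero_outcomes_coarse_grain: "card (nonzero_outcomes n (coarse_grain k f B)) \<le> k"
proof -
  have "nonzero_outcomes n (coarse_grain k f B) \<subseteq> f ` {..<k}"
    unfolding nonzero_outcomes_def using coarse_grain_eq_0 by blast
  then show ?thesis
    by (metis card_image_le card_lessThan card_mono finite_imageI finite_lessThan order_trans)
qed

lemma povm_coarse_grain:
  assumes "povm k B" and "f \<in> {..<k} \<rightarrow> {..<n}"
  shows "povm n (coarse_grain k f B)"
  using assms unfolding povm_def
  by (simp add: sum_coarse_grain) (auto simp: coarse_grain_def intro!: psd_sum)

lemma post_processing_eq_mixture_of_coarse_grains:
  fixes q :: "nat \<Rightarrow> nat \<Rightarrow> real" and B :: "nat \<Rightarrow> 'a::real_vector"
  assumes "\<And>i'. i' < k \<Longrightarrow> (\<Sum>i<n. q i i') = 1" and "i < n"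
  shows "(\<Sum>i'<k. q i i' *\<^sub>R B i')
    = (\<Sum>f\<in>PiE {..<k} (\<lambda>_. {..<n}). (\<Prod>x<k. q (f x) x) *\<^sub>R coarse_grain k f B i)"
    (is "_ = (\<Sum>f\<in>?F. ?w f *\<^sub>R _)")
proof -
  have "(\<Sum>f\<in>?F. ?w f *\<^sub>R coarse_grain k f B i)
      = (\<Sum>f\<in>?F. \<Sum>i'<k. (if f i' = i then ?w f else 0) *\<^sub>R B i')"
    unfolding coarse_grain_def scaleR_sum_right by (intro sum.cong refl) simp
  also have "\<dots> = (\<Sum>i'<k. (\<Sum>f\<in>?F. if f i' = i then ?w f else 0) *\<^sub>R B i')"
    unfolding scaleR_sum_left by (rule sum.swap)
  also have "\<dots> = (\<Sum>i'<k. q i i' *\<^sub>R B i')"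
    using assms by (intro sum.cong refl arg_cong2[where f=scaleR] sum_PiE_prod_marginal) auto
  finally show ?thesis ..
qed

lemma sum_lessThan_if_less:
  "(m::nat) \<le> k \<Longrightarrow> (\<Sum>i<k. if i < m then g i else 0) = (\<Sum>i<m. g i)"
  by (rule sum.mono_neutral_cong_right) auto

lemma sparse_povm_eq_coarse_grain:
  fixes E :: "nat \<Rightarrow> complex^'d^'d"
  assumes "povm n E" and "card (nonzero_outcomes n E) \<le> k"
  shows "\<exists>B f. povm k B \<and> f \<in> {..<k} \<rightarrow> {..<n} \<and> (\<forall>i<n. E i = coarse_grain k f B i)"
proof -
  define S where "S = nonzero_outcomes n E"
  define m where "m = card S"
  obtain h where h: "bij_betw h {..<m} S"
    using ex_bij_betw_nat_finite[of S] by (auto simp: S_def m_def atLeast0LessThan)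
  have hS: "h i' < n \<and> E (h i') \<noteq> 0" if "i' < m" for i'
    using bij_betwE[OF h] that by (auto simp: S_def nonzero_outcomes_def)
  define B where "B i' = (if i' < m then E (h i') else 0)" for i'
  define f where "f i' = (if i' < m then h i' else 0)" for i'
  have sum_S: "(\<Sum>i'<k. if i' < m then g (h i') else 0) = (\<Sum>s\<in>S. g s)"
    for g :: "nat \<Rightarrow> complex^'d^'d"
    using assms(2) sum_lessThan_if_less[of m k "\<lambda>i'. g (h i')"] sum.reindex_bij_betw[OF h, of g]
    by (simp add: S_def m_def)
  have "psd (B i')" if "i' < k" for i'
    using assms(1) hS by (auto simp: B_def povm_def)
  moreover have "(\<Sum>i'<k. B i') = mat 1"
  proof -
    have "(\<Sum>i'<k. B i') = (\<Sum>s\<in>S. E s)"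
      unfolding B_def by (rule sum_S)
    also have "\<dots> = (\<Sum>i<n. E i)"
      by (rule sum.mono_neutral_left) (auto simp: S_def nonzero_outcomes_def)
    finally show ?thesis
      using assms(1) by (simp add: povm_def)
  qed
  moreover have "f \<in> {..<k} \<rightarrow> {..<n}"
    using hS povm_imp_pos[OF assms(1)] by (auto simp: f_def)
  moreover have "E i = coarse_grain k f B i" if "i < n" for i
  proof -
    have "coarse_grain k f B i = (\<Sum>i'<k. if i' < m then (if h i' = i then E (h i') else 0) else 0)"
      unfolding coarse_grain_def B_def f_def by (intro sum.cong refl) auto
    also have "\<dots> = (\<Sum>s\<in>S. if s = i then E s else 0)"
      by (rule sum_S)
    also have "\<dots> = E i"
      using that by (simp add: sum.delta' S_def nonzero_outcomes_def)
    finally show ?thesis ..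
  qed
  ultimately show ?thesis
    unfolding povm_def by blast
qed

definition sparse_povm_mixture ::
    "nat \<Rightarrow> nat \<Rightarrow> (nat \<Rightarrow> complex^'d^'d) \<Rightarrow>
      'x set \<Rightarrow> ('x \<Rightarrow> real) \<Rightarrow> ('x \<Rightarrow> nat \<Rightarrow> complex^'d^'d) \<Rightarrow> bool"
  where "sparse_povm_mixture k n A X c D \<longleftrightarrow>
    finite X \<and> (\<forall>x\<in>X. 0 \<le> c x) \<and> sum c X = 1 \<and>
    (\<forall>x\<in>X. povm n (D x) \<and> card (nonzero_outcomes n (D x)) \<le> k) \<and>
    (\<forall>i<n. A i = (\<Sum>x\<in>X. c x *\<^sub>R D x i))"

definition sparse_joint_measurement ::
    "nat \<Rightarrow> nat \<Rightarrow> nat \<Rightarrow> (nat \<Rightarrow> complex^'d^'d) \<Rightarrow>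
      (nat \<Rightarrow> real) \<Rightarrow> (nat \<Rightarrow> nat \<Rightarrow> complex^'d^'d) \<Rightarrow> bool"
  where "sparse_joint_measurement k n m A p M \<longleftrightarrow>
    (\<forall>j<m. p j \<ge> 0) \<and> (\<Sum>j<m. p j) = 1 \<and>
    (\<forall>i<n. \<forall>j<m. psd (M i j)) \<and>
    (\<forall>i<n. (\<Sum>j<m. M i j) = A i) \<and>
    (\<forall>j<m. (\<Sum>i<n. M i j) = p j *\<^sub>R mat 1) \<and>
    (\<forall>j<m. card {i. i < n \<and> M i j = 0} \<ge> n - k)"

lemma simulable_imp_sparse_povm_mixture:
  fixes A :: "nat \<Rightarrow> complex^'d^'d"
  assumes "k_outcome_simulable k n A"
  shows "\<exists>(X :: (nat \<times> (nat \<Rightarrow> nat)) set) c D. sparse_povm_mixture k n A X c D"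
proof -
  obtain N p and B :: "nat \<Rightarrow> nat \<Rightarrow> complex^'d^'d" and q :: "nat \<Rightarrow> nat \<Rightarrow> nat \<Rightarrow> real" where
    B: "\<forall>r<N. povm k (B r)" and p_nonneg: "\<forall>r<N. p r \<ge> 0" and p_sum: "(\<Sum>r<N. p r) = 1"
    and q: "\<forall>r<N. \<forall>i'<k. (\<forall>i<n. q i r i' \<ge> 0) \<and> (\<Sum>i<n. q i r i') = 1"
    and A: "\<forall>i<n. A i = (\<Sum>r<N. p r *\<^sub>R (\<Sum>i'<k. q i r i' *\<^sub>R B r i'))"
    using assms unfolding k_outcome_simulable_def by blast
  define F where "F = PiE {..<k} (\<lambda>_. {..<n::nat})"
  define w where "w r f = (\<Prod>x<k. q (f x) r x)" for r f
  define c where "c = (\<lambda>(r, f). p r * w r f)"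
  define D where "D = (\<lambda>(r, f). coarse_grain k f (B r))"
  have "finite ({..<N} \<times> F)"
    by (simp add: F_def finite_PiE)
  moreover have "\<forall>x\<in>{..<N} \<times> F. 0 \<le> c x"
    using p_nonneg q by (auto simp: c_def w_def F_def PiE_iff intro!: mult_nonneg_nonneg prod_nonneg)
  moreover have "sum c ({..<N} \<times> F) = 1"
  proof -
    have "(\<Sum>f\<in>F. w r f) = 1" if "r < N" for r
      unfolding F_def w_def using q that by (intro sum_PiE_prod_eq_1) auto
    then show ?thesis
      by (simp add: c_def sum.cartesian_product[symmetric] sum_distrib_left[symmetric] p_sum)
  qed
  moreover have "\<forall>x\<in>{..<N} \<times> F. povm n (D x) \<and> card (nonzero_outcomes n (D x)) \<le> k"
    using B by (auto simp: D_def F_def card_nonzero_outcomes_coarse_grain intro!: povm_coarse_grain)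
  moreover have "A i = (\<Sum>x\<in>{..<N} \<times> F. c x *\<^sub>R D x i)" if "i < n" for i
  proof -
    have "A i = (\<Sum>r<N. p r *\<^sub>R (\<Sum>i'<k. q i r i' *\<^sub>R B r i'))"
      using A that by blast
    also have "\<dots> = (\<Sum>r<N. p r *\<^sub>R (\<Sum>f\<in>F. w r f *\<^sub>R coarse_grain k f (B r) i))"
      unfolding F_def w_def using q that
      by (intro sum.cong refl arg_cong2[where f=scaleR] post_processing_eq_mixture_of_coarse_grains) auto
    also have "\<dots> = (\<Sum>x\<in>{..<N} \<times> F. c x *\<^sub>R D x i)"
      by (simp add: c_def D_def scaleR_sum_right sum.cartesian_product split_def)
    finally show ?thesis .
  qed
  ultimately show ?thesis
    unfolding sparse_povm_mixture_def by blast
qed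

lemma sparse_joint_measurement_group_mixture:
  assumes mix: "sparse_povm_mixture k n A X c D"
    and block: "\<forall>x\<in>X. block x < m \<and> nonzero_outcomes n (D x) \<subseteq> T (block x)"
    and T: "\<forall>j<m. finite (T j) \<and> card (T j) \<le> k"
  shows "sparse_joint_measurement k n m A
    (\<lambda>j. sum c {x \<in> X. block x = j}) (\<lambda>i j. \<Sum>x\<in>{x \<in> X. block x = j}. c x *\<^sub>R D x i)"
proof -
  have X: "finite X" "\<forall>x\<in>X. 0 \<le> c x" "sum c X = 1"
    and D: "\<forall>x\<in>X. povm n (D x)"
    and A: "\<forall>i<n. A i = (\<Sum>x\<in>X. c x *\<^sub>R D x i)"
    using mix unfolding sparse_povm_mixture_def by blast+
  define P where "P j = {x \<in> X. block x = j}" for j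
  define p where "p j = sum c (P j)" for j
  define M where "M i j = (\<Sum>x\<in>P j. c x *\<^sub>R D x i)" for i j
  have group: "(\<Sum>j<m. \<Sum>x\<in>P j. h x) = (\<Sum>x\<in>X. h x)" for h :: "_ \<Rightarrow> 'z::comm_monoid_add"
    unfolding P_def using block X(1) by (intro sum.group) auto
  have "\<forall>j<m. p j \<ge> 0"
    using X(2) by (auto simp: p_def P_def intro: sum_nonneg)
  moreover have "(\<Sum>j<m. p j) = 1"
    using X(3) by (simp add: p_def group)
  moreover have "\<forall>i<n. \<forall>j<m. psd (M i j)"
    using X(2) D by (auto simp: M_def P_def povm_def intro!: psd_sum psd_scaleR)
  moreover have "\<forall>i<n. (\<Sum>j<m. M i j) = A i"
    using A by (simp add: M_def group)
  moreover have "(\<Sum>i<n. M i j) = p j *\<^sub>R mat 1" for j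
  proof -
    have "(\<Sum>i<n. M i j) = (\<Sum>x\<in>P j. c x *\<^sub>R (\<Sum>i<n. D x i))"
      unfolding M_def scaleR_sum_right by (rule sum.swap)
    also have "\<dots> = (\<Sum>x\<in>P j. c x *\<^sub>R mat 1)"
      using D by (intro sum.cong refl) (auto simp: P_def povm_def)
    finally show ?thesis
      by (simp add: p_def scaleR_sum_left)
  qed
  moreover have "card {i. i < n \<and> M i j = 0} \<ge> n - k" if "j < m" for j
  proof -
    have "nonzero_outcomes n (\<lambda>i. M i j) \<subseteq> T j"
    proof
      fix i assume i: "i \<in> nonzero_outcomes n (\<lambda>i. M i j)"
      then have "(\<Sum>x\<in>P j. c x *\<^sub>R D x i) \<noteq> 0"
        by (simp add: M_def nonzero_outcomes_def)
      then obtain x where "x \<in> P j" "D x i \<noteq> 0"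
        by (rule sum.not_neutral_contains_not_neutral) auto
      then show "i \<in> T j"
        using block i by (auto simp: P_def nonzero_outcomes_def)
    qed
    then have "card (nonzero_outcomes n (\<lambda>i. M i j)) \<le> k"
      using T that card_mono le_trans by blast
    then show ?thesis
      using card_zero_outcomes_ge_iff[of n k "\<lambda>i. M i j"] by simp
  qed
  ultimately show ?thesis
    unfolding sparse_joint_measurement_def p_def M_def P_def by blast
qed

lemma sparse_povm_mixture_imp_sparse_joint_measurement:
  assumes mix: "sparse_povm_mixture k n A X c D" and "k \<le> n"
  shows "\<exists>p M. sparse_joint_measurement k n (n choose k) A p M"
proof -
  obtain g where g: "bij_betw g {..<n choose k} {T. T \<subseteq> {..<n} \<and> card T = k}"
    using ex_bij_betw_nat_finite[of "{T. T \<subseteq> {..<n} \<and> card T = k}"]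
    by (auto simp: n_subsets atLeast0LessThan)
  have "\<exists>j. j < n choose k \<and> nonzero_outcomes n (D x) \<subseteq> g j" if x: "x \<in> X" for x
  proof -
    obtain T where T: "nonzero_outcomes n (D x) \<subseteq> T" "T \<subseteq> {..<n}" "card T = k"
      using exists_subset_between[of "nonzero_outcomes n (D x)" k "{..<n}"] mix x \<open>k \<le> n\<close>
      by (auto simp: sparse_povm_mixture_def nonzero_outcomes_def)
    then have "T \<in> g ` {..<n choose k}"
      using bij_betw_imp_surj_on[OF g] by simp
    then show ?thesis
      using T(1) by auto
  qed
  then have "\<forall>x\<in>X. \<exists>j. j < n choose k \<and> nonzero_outcomes n (D x) \<subseteq> g j"
    by blast
  from bchoice[OF this] obtain block
    where "\<forall>x\<in>X. block x < n choose k \<and> nonzero_outcomes n (D x) \<subseteq> g (block x)"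
    by blast
  moreover have "\<forall>j<n choose k. finite (g j) \<and> card (g j) \<le> k"
  proof (intro allI impI)
    fix j assume "j < n choose k"
    then have "g j \<subseteq> {..<n}" "card (g j) = k"
      using bij_betwE[OF g] by blast+
    then show "finite (g j) \<and> card (g j) \<le> k"
      using finite_subset by auto
  qed
  ultimately show ?thesis
    using sparse_joint_measurement_group_mixture[OF mix] by blast
qed

lemma sparse_joint_measurement_imp_sparse_povm_mixture:
  assumes "sparse_joint_measurement k n m A p M"
  shows "sparse_povm_mixture k n A {j. j < m \<and> p j \<noteq> 0} p (\<lambda>j i. (1 / p j) *\<^sub>R M i j)"
proof -
  define X where "X = {j. j < m \<and> p j \<noteq> 0}"
  have p: "\<forall>j<m. p j \<ge> 0" "(\<Sum>j<m. p j) = 1"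
    and M: "\<forall>i<n. \<forall>j<m. psd (M i j)" "\<forall>i<n. (\<Sum>j<m. M i j) = A i"
      "\<forall>j<m. (\<Sum>i<n. M i j) = p j *\<^sub>R mat 1" "\<forall>j<m. card {i. i < n \<and> M i j = 0} \<ge> n - k"
    using assms unfolding sparse_joint_measurement_def by blast+
  have X_sum: "(\<Sum>j\<in>X. h j) = (\<Sum>j<m. h j)" if "\<And>j. j < m \<Longrightarrow> p j = 0 \<Longrightarrow> h j = 0"
    for h :: "nat \<Rightarrow> 'z::comm_monoid_add"
    using that by (intro sum.mono_neutral_left) (auto simp: X_def)
  have M_eq_0: "M i j = 0" if "j < m" "p j = 0" "i < n" for i j
    using psd_sum_eq_0_imp_eq_0[of "{..<n}" "\<lambda>i. M i j" i] M(1,3) that by simp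
  have "sum p X = 1"
    using p(2) by (simp add: X_sum)
  moreover have "povm n (\<lambda>i. (1 / p j) *\<^sub>R M i j)" if "j \<in> X" for j
    using that p(1) M(1,3) by (auto simp: X_def povm_def scaleR_sum_right[symmetric] intro!: psd_scaleR)
  moreover have "card (nonzero_outcomes n (\<lambda>i. (1 / p j) *\<^sub>R M i j)) \<le> k" if "j \<in> X" for j
    using that M(4) card_zero_outcomes_ge_iff[of n k "\<lambda>i. M i j"]
    by (simp add: X_def nonzero_outcomes_def)
  moreover have "A i = (\<Sum>j\<in>X. p j *\<^sub>R (1 / p j) *\<^sub>R M i j)" if "i < n" for i
  proof -
    have "(\<Sum>j\<in>X. p j *\<^sub>R (1 / p j) *\<^sub>R M i j) = (\<Sum>j\<in>X. M i j)"
      by (intro sum.cong) (auto simp: X_def)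
    also have "\<dots> = (\<Sum>j<m. M i j)"
      using M_eq_0 that by (intro X_sum)
    finally show ?thesis
      using M(2) that by simp
  qed
  ultimately show ?thesis
    using p(1) unfolding sparse_povm_mixture_def X_def by auto
qed

lemma sparse_povm_mixture_imp_simulable:
  assumes "sparse_povm_mixture k n A X c D"
  shows "k_outcome_simulable k n A"
proof -
  have X: "finite X" "\<forall>x\<in>X. 0 \<le> c x" "sum c X = 1"
    and D: "\<forall>x\<in>X. povm n (D x) \<and> card (nonzero_outcomes n (D x)) \<le> k"
    and A: "\<forall>i<n. A i = (\<Sum>x\<in>X. c x *\<^sub>R D x i)"
    using assms unfolding sparse_povm_mixture_def by blast+
  have "\<forall>x\<in>X. \<exists>B f. povm k B \<and> f \<in> {..<k} \<rightarrow> {..<n} \<and> (\<forall>i<n. D x i = coarse_grain k f B i)"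
    using D sparse_povm_eq_coarse_grain by blast
  then obtain B f where Bf: "\<forall>x\<in>X. povm k (B x) \<and> f x \<in> {..<k} \<rightarrow> {..<n} \<and>
      (\<forall>i<n. D x i = coarse_grain k (f x) (B x) i)"
    by metis
  obtain h where h: "bij_betw h {..<card X} X"
    using ex_bij_betw_nat_finite[OF X(1)] by (auto simp: atLeast0LessThan)
  define q where "q i r i' = (if f (h r) i' = i then 1 else 0 :: real)" for i r i'
  have "\<forall>r<card X. povm k (B (h r))"
    using Bf bij_betwE[OF h] by blast
  moreover have "\<forall>r<card X. c (h r) \<ge> 0" and "(\<Sum>r<card X. c (h r)) = 1"
    using X bij_betwE[OF h] sum.reindex_bij_betw[OF h, of c] by auto
  moreover have "\<forall>r<card X. \<forall>i'<k. (\<forall>i<n. q i r i' \<ge> 0) \<and> (\<Sum>i<n. q i r i') = 1"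
    using Bf bij_betwE[OF h] by (fastforce simp: q_def sum.delta' Pi_iff)
  moreover have "\<forall>i<n. A i = (\<Sum>r<card X. c (h r) *\<^sub>R (\<Sum>i'<k. q i r i' *\<^sub>R B (h r) i'))"
  proof (intro allI impI)
    fix i assume "i < n"
    have "A i = (\<Sum>x\<in>X. c x *\<^sub>R coarse_grain k (f x) (B x) i)"
      using A Bf \<open>i < n\<close> by simp
    also have "\<dots> = (\<Sum>r<card X. c (h r) *\<^sub>R coarse_grain k (f (h r)) (B (h r)) i)"
      by (rule sum.reindex_bij_betw[OF h, symmetric])
    also have "\<dots> = (\<Sum>r<card X. c (h r) *\<^sub>R (\<Sum>i'<k. q i r i' *\<^sub>R B (h r) i'))"
      unfolding coarse_grain_def q_def by (intro sum.cong refl arg_cong2[where f=scaleR]) simp_all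
    finally show "A i = (\<Sum>r<card X. c (h r) *\<^sub>R (\<Sum>i'<k. q i r i' *\<^sub>R B (h r) i'))" .
  qed
  ultimately show ?thesis
    unfolding k_outcome_simulable_def
    by (intro exI[of _ "card X"] exI[of _ "\<lambda>r. c (h r)"] exI[of _ "\<lambda>r. B (h r)"] exI[of _ q]) blast
qed

theorem proposition2:
  fixes k n :: nat and A :: "nat \<Rightarrow> complex^'d^'d"
  assumes "1 \<le> k" and "k < n" and "povm n A"
  shows "k_outcome_simulable k n A \<longleftrightarrow>
    (\<exists>(p::nat \<Rightarrow> real) (M::nat \<Rightarrow> nat \<Rightarrow> complex^'d^'d).
       (\<forall>j<n choose k. p j \<ge> 0) \<and> (\<Sum>j<n choose k. p j) = 1 \<and>
       (\<forall>i<n. \<forall>j<n choose k. psd (M i j)) \<and>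
       (\<forall>i<n. (\<Sum>j<n choose k. M i j) = A i) \<and>
       (\<forall>j<n choose k. (\<Sum>i<n. M i j) = p j *\<^sub>R mat 1) \<and>
       (\<forall>j<n choose k. card {i. i < n \<and> M i j = 0} \<ge> n - k))"
proof -
  have "k_outcome_simulable k n A \<longleftrightarrow> (\<exists>p M. sparse_joint_measurement k n (n choose k) A p M)"
  proof
    assume "k_outcome_simulable k n A"
    then obtain X :: "(nat \<times> (nat \<Rightarrow> nat)) set" and c D where "sparse_povm_mixture k n A X c D"
      using simulable_imp_sparse_povm_mixture by blast
    then show "\<exists>p M. sparse_joint_measurement k n (n choose k) A p M"
      using sparse_povm_mixture_imp_sparse_joint_measurement \<open>k < n\<close> by (meson less_imp_le)
  next
    assume "\<exists>p M. sparse_joint_measurement k n (n choose k) A p M"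
    then show "k_outcome_simulable k n A"
      using sparse_joint_measurement_imp_sparse_povm_mixture sparse_povm_mixture_imp_simulable by blast
  qed
  then show ?thesis
    unfolding sparse_joint_measurement_def .
qed

end
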